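(* Let $R=(g(x),f(x))$ be a Riordan matrix with positive main diagonal entries, and let $I$ be the infinite identity matrix. Then $R+I$ is a Riordan matrix if and only if $f(x)=x$.
   Context: A Riordan matrix $(g(x),f(x))$, with formal power series $g(x)=g_0+g_1x+\cdots$, $g_0\ne0$, and $f(x)=f_1x+f_2x^2+\cdots$, $f_1\ne0$, is the infinite lower triangular matrix (indices $0,1,2,\ldots$) whose $j$-th column has generating function $g(x)f(x)^j$; its main diagonal entries are $g_0f_1^j$. *)

theory Defs
  imports "HOL-Computational_Algebra.Formal_Power_Series"
begin

text \<open>Riordan matrices over the reals, represented as infinite lower triangular
  matrices, i.e. functions from row index and column index (both starting at 0)
  to entries.\<close>

definition riordan_matrix :: "real fps \<Rightarrow> real fps \<Rightarrow> nat \<Rightarrow> nat \<Rightarrow> real" where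
  "riordan_matrix g f = (\<lambda>i j. fps_nth (g * f ^ j) i)"

definition riordan_pair :: "real fps \<Rightarrow> real fps \<Rightarrow> bool" where
  "riordan_pair g f \<longleftrightarrow> fps_nth g 0 \<noteq> 0 \<and> fps_nth f 0 = 0 \<and> fps_nth f 1 \<noteq> 0"

definition is_riordan :: "(nat \<Rightarrow> nat \<Rightarrow> real) \<Rightarrow> bool" where
  "is_riordan M \<longleftrightarrow> (\<exists>g f. riordan_pair g f \<and> M = riordan_matrix g f)"

definition identity_matrix :: "nat \<Rightarrow> nat \<Rightarrow> real" where
  "identity_matrix = (\<lambda>i j. if i = j then 1 else 0)"

end

theory Submission
  imports Defs
begin

text \<open>Adding I to (g, f) adds x^j to the j-th column generating function. If the sum is a
  Riordan matrix (h, k), comparing columns 0, 1, 2 gives h = g + 1, hk = gf + x and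
  hk^2 = gf^2 + x^2; eliminating k from (hk)^2 = h(hk^2) leaves g(f - x)^2 = 0, so f = x.
  Conversely (g, x) + I = (g + 1, x), which is Riordan because g_0 > 0 forces g_0 + 1 \<noteq> 0.\<close>

lemma eq_if_column_relations:
  fixes g f h k x :: "'a::idom"
  assumes "g \<noteq> 0"
    and "h = g + 1"
    and "h * k = g * f + x"
    and "h * k^2 = g * f^2 + x^2"
  shows "f = x"
proof -
  have "(g * f + x)^2 = (h * k)^2"
    by (simp add: assms(3))
  also have "\<dots> = h * (h * k^2)"
    by (simp add: power2_eq_square algebra_simps)
  also have "\<dots> = (g + 1) * (g * f^2 + x^2)"
    by (simp only: assms(4)) (simp add: assms(2))
  finally have columns: "(g * f + x)^2 = (g + 1) * (g * f^2 + x^2)" .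
  have "g * (f - x)^2 = (g + 1) * (g * f^2 + x^2) - (g * f + x)^2"
    by (simp add: power2_eq_square algebra_simps)
  also have "\<dots> = 0"
    by (simp add: columns)
  finally show ?thesis
    using assms(1) by simp
qed

lemma riordan_matrix_add_identity:
  "(\<lambda>i j. riordan_matrix g f i j + identity_matrix i j) = (\<lambda>i j. fps_nth (g * f^j + fps_X^j) i)"
  by (auto simp: riordan_matrix_def identity_matrix_def fps_X_power_iff fun_eq_iff)

lemma riordan_matrix_X_add_identity:
  "(\<lambda>i j. riordan_matrix g fps_X i j + identity_matrix i j) = riordan_matrix (g + 1) fps_X"
  unfolding riordan_matrix_add_identity by (simp add: riordan_matrix_def distrib_right)

theorem lemma5p2:
  fixes g f :: "real fps"
  assumes "riordan_pair g f"
    and "\<forall>j. riordan_matrix g f j j > 0"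
  shows "is_riordan (\<lambda>i j. riordan_matrix g f i j + identity_matrix i j) \<longleftrightarrow> f = fps_X"
proof
  assume "is_riordan (\<lambda>i j. riordan_matrix g f i j + identity_matrix i j)"
  then obtain h k where "(\<lambda>i j. fps_nth (g * f^j + fps_X^j) i) = riordan_matrix h k"
    unfolding is_riordan_def riordan_matrix_add_identity by blast
  then have col: "h * k^j = g * f^j + fps_X^j" for j
    by (simp add: riordan_matrix_def fun_eq_iff fps_eq_iff)
  have "g \<noteq> 0"
    using assms(1) by (auto simp: riordan_pair_def)
  moreover have "h = g + 1"
    using col[of 0] by simp
  ultimately show "f = fps_X"
    using col[of 1, unfolded power_one_right] col[of 2] by (rule eq_if_column_relations)
next
  assume f: "f = fps_X"
  have "fps_nth g 0 > 0"
    using assms(2)[rule_format, of 0] by (simp add: riordan_matrix_def)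
  then have "riordan_pair (g + 1) fps_X"
    by (simp add: riordan_pair_def)
  then show "is_riordan (\<lambda>i j. riordan_matrix g f i j + identity_matrix i j)"
    unfolding is_riordan_def f riordan_matrix_X_add_identity by blast
qed

end
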